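(* Let $\mathcal{H}$ be a complex Hilbert space of finite dimension $n\geq 2$ and let $m\geq 2$. There does not exist a density operator $\rho$ on $\mathcal{H}^{\otimes m}$ that is in single $\sigma$-measurement consensus ($\sigma$SMC) for every self-adjoint operator $\sigma$ on $\mathcal{H}$.
   Context: For $X$ an operator on $\mathcal{H}$, write $X^{(i)}=I^{\otimes(i-1)}\otimes X\otimes I^{\otimes(m-i)}$. Given a self-adjoint $\sigma$ on $\mathcal{H}$ with spectral decomposition $\sigma=\sum_j s_j\Pi_j$ (the $s_j$ pairwise distinct, $\Pi_j$ the orthogonal spectral projectors), a density operator $\rho$ on $\mathcal{H}^{\otimes m}$ (positive semidefinite, trace one) is in $\sigma$SMC if $\mathrm{Tr}(\Pi_j^{(k)}\Pi_j^{(\ell)}\rho)=\mathrm{Tr}(\Pi_j^{(\ell)}\rho)$ for all $k,\ell\in\{1,\dots,m\}$ and all $j$. *)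

theory Defs
  imports Complex_Main
begin

text \<open>Coordinates: H = C^n with standard basis indexed by {..<n}.
  Operators on H are matrices  nat \<Rightarrow> nat \<Rightarrow> complex  (only entries with
  indices < n matter); vectors are  nat \<Rightarrow> complex.
  The tensor power H^{\<otimes>m} has the product basis indexed by lists of
  length m with entries < n; operators on it are matrices indexed by such lists.\<close>

definition tidx :: "nat \<Rightarrow> nat \<Rightarrow> nat list set" where
  "tidx n m = {xs. length xs = m \<and> (\<forall>x\<in>set xs. x < n)}"

definition hmv :: "nat \<Rightarrow> (nat \<Rightarrow> nat \<Rightarrow> complex) \<Rightarrow> (nat \<Rightarrow> complex) \<Rightarrow> nat \<Rightarrow> complex" where
  "hmv n A v = (\<lambda>i. \<Sum>j<n. A i j * v j)"

definition hmul :: "nat \<Rightarrow> (nat \<Rightarrow> nat \<Rightarrow> complex) \<Rightarrow> (nat \<Rightarrow> nat \<Rightarrow> complex) \<Rightarrow> nat \<Rightarrow> nat \<Rightarrow> complex" where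
  "hmul n A B = (\<lambda>i k. \<Sum>j<n. A i j * B j k)"

definition self_adjoint :: "nat \<Rightarrow> (nat \<Rightarrow> nat \<Rightarrow> complex) \<Rightarrow> bool" where
  "self_adjoint n A \<longleftrightarrow> (\<forall>i<n. \<forall>j<n. A j i = cnj (A i j))"

text \<open>P is the orthogonal spectral projector of sigma belonging to the value s:
  P is an orthogonal projection (self-adjoint, idempotent) whose range
  (= set of fixed vectors) is the eigenspace ker(sigma - s I).
  If s is not an eigenvalue this forces P = 0.\<close>
definition spectral_projector ::
  "nat \<Rightarrow> (nat \<Rightarrow> nat \<Rightarrow> complex) \<Rightarrow> complex \<Rightarrow> (nat \<Rightarrow> nat \<Rightarrow> complex) \<Rightarrow> bool" where
  "spectral_projector n \<sigma> s P \<longleftrightarrow>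
     self_adjoint n P \<and>
     (\<forall>i<n. \<forall>k<n. hmul n P P i k = P i k) \<and>
     (\<forall>v. (\<forall>i<n. hmv n P v i = v i) \<longleftrightarrow> (\<forall>i<n. hmv n \<sigma> v i = s * v i))"

text \<open>X^{(i)} = I\<otimes>...\<otimes>X\<otimes>...\<otimes>I with X in tensor slot i (1-based, 1 \<le> i \<le> m).\<close>
definition lift :: "nat \<Rightarrow> nat \<Rightarrow> nat \<Rightarrow> (nat \<Rightarrow> nat \<Rightarrow> complex) \<Rightarrow> nat list \<Rightarrow> nat list \<Rightarrow> complex" where
  "lift n m i X = (\<lambda>a b. X (a ! (i - 1)) (b ! (i - 1)) *
      (\<Prod>j\<in>{..<m} - {i - 1}. if a ! j = b ! j then 1 else 0))"

definition tmul :: "nat \<Rightarrow> nat \<Rightarrow> (nat list \<Rightarrow> nat list \<Rightarrow> complex) \<Rightarrow> (nat list \<Rightarrow> nat list \<Rightarrow> complex)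
     \<Rightarrow> nat list \<Rightarrow> nat list \<Rightarrow> complex" where
  "tmul n m A B = (\<lambda>a c. \<Sum>b\<in>tidx n m. A a b * B b c)"

definition ttrace :: "nat \<Rightarrow> nat \<Rightarrow> (nat list \<Rightarrow> nat list \<Rightarrow> complex) \<Rightarrow> complex" where
  "ttrace n m A = (\<Sum>a\<in>tidx n m. A a a)"

definition density_operator :: "nat \<Rightarrow> nat \<Rightarrow> (nat list \<Rightarrow> nat list \<Rightarrow> complex) \<Rightarrow> bool" where
  "density_operator n m \<rho> \<longleftrightarrow>
     (\<forall>a\<in>tidx n m. \<forall>b\<in>tidx n m. \<rho> b a = cnj (\<rho> a b)) \<and>
     (\<forall>v::nat list \<Rightarrow> complex.
        (\<Sum>a\<in>tidx n m. \<Sum>b\<in>tidx n m. cnj (v a) * \<rho> a b * v b) \<in> \<real> \<and>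
        0 \<le> Re (\<Sum>a\<in>tidx n m. \<Sum>b\<in>tidx n m. cnj (v a) * \<rho> a b * v b)) \<and>
     ttrace n m \<rho> = 1"

definition sigma_SMC :: "nat \<Rightarrow> nat \<Rightarrow> (nat \<Rightarrow> nat \<Rightarrow> complex) \<Rightarrow> (nat list \<Rightarrow> nat list \<Rightarrow> complex) \<Rightarrow> bool" where
  "sigma_SMC n m \<sigma> \<rho> \<longleftrightarrow>
     (\<forall>s P. spectral_projector n \<sigma> s P \<longrightarrow>
        (\<forall>k\<in>{1..m}. \<forall>l\<in>{1..m}.
           ttrace n m (tmul n m (tmul n m (lift n m k P) (lift n m l P)) \<rho>)
           = ttrace n m (tmul n m (lift n m l P) \<rho>)))"

end

theory Submission
  imports Defs
begin

(* For an orthogonal projector P on H, the self-adjoint operator \<sigma> = P has the spectral projectors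
   P and I - P, and \<sigma>SMC for both in the slots 1 and 2 gives
   Tr((P \<otimes> (I - P) \<otimes> I) \<rho>) = Tr(((I - P) \<otimes> P \<otimes> I) \<rho>) = 0.
   For P = |u><u| / <u|u>, the complement I - P is a nonnegative combination of rank-one operators
   |v><v| with v orthogonal to u, so positivity of \<rho> forces <u \<otimes> v \<otimes> e| \<rho> |u \<otimes> v \<otimes> e> = 0
   for every basis vector e of the remaining factors.  The basis vectors u = e_i, v = e_j (i \<noteq> j)
   kill the diagonal entries of \<rho> at i j r; the pairs u = e_i + \<omega> e_j, v = e_i - \<omega> e_j with
   \<omega> = 1 and \<omega> = \<i>, combined by the parallelogram law, kill those at i i r (this needs n \<ge> 2).
   Hence Tr \<rho> = 0, contradicting Tr \<rho> = 1. *)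

lemma prod_indicator:
  "finite S \<Longrightarrow> (\<Prod>j\<in>S. if P j then (1::complex) else 0) = (if \<forall>j\<in>S. P j then 1 else 0)"
  by (induction S rule: finite_induct) auto

lemma if_zero_mult: "(if P then a else 0) * b = (if P then a * b else (0::'a::mult_zero))"
  by simp

lemma mult_if_zero: "b * (if P then a else 0) = (if P then b * a else (0::'a::mult_zero))"
  by simp

lemma sum_swap_pairs:
  "(\<Sum>a\<in>A. \<Sum>b\<in>B. \<Sum>c\<in>C. \<Sum>d\<in>D. g a b c d) = (\<Sum>c\<in>C. \<Sum>d\<in>D. \<Sum>a\<in>A. \<Sum>b\<in>B. g a b c d)"
proof -
  have "(\<Sum>a\<in>A. \<Sum>b\<in>B. \<Sum>c\<in>C. \<Sum>d\<in>D. g a b c d) = (\<Sum>a\<in>A. \<Sum>c\<in>C. \<Sum>b\<in>B. \<Sum>d\<in>D. g a b c d)"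
    by (intro sum.cong refl) (rule sum.swap)
  also have "\<dots> = (\<Sum>c\<in>C. \<Sum>a\<in>A. \<Sum>d\<in>D. \<Sum>b\<in>B. g a b c d)"
    by (subst sum.swap) (intro sum.cong refl, rule sum.swap)
  also have "\<dots> = (\<Sum>c\<in>C. \<Sum>d\<in>D. \<Sum>a\<in>A. \<Sum>b\<in>B. g a b c d)"
    by (intro sum.cong refl) (rule sum.swap)
  finally show ?thesis .
qed

lemma finite_tidx: "finite (tidx n k)"
proof (rule finite_subset)
  show "tidx n k \<subseteq> {xs. set xs \<subseteq> {..<n} \<and> length xs = k}" by (auto simp: tidx_def)
qed (rule finite_lists_length_eq, simp)

lemma tidx_Suc: "tidx n (Suc k) = (\<lambda>(x, r). x # r) ` ({..<n} \<times> tidx n k)"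
  by (auto simp: tidx_def image_iff length_Suc_conv)

lemma sum_tidx_Suc: "(\<Sum>a\<in>tidx n (Suc k). f a) = (\<Sum>x<n. \<Sum>r\<in>tidx n k. f (x # r))"
proof -
  have "inj_on (\<lambda>(x, r). x # r) ({..<n} \<times> tidx n k)" by (auto simp: inj_on_def)
  then show ?thesis
    by (simp add: tidx_Suc sum.reindex sum.cartesian_product finite_tidx split_def)
qed

lemma sum_tidx_Suc_Suc:
  "(\<Sum>a\<in>tidx n (Suc (Suc k)). f a) = (\<Sum>x<n. \<Sum>y<n. \<Sum>r\<in>tidx n k. f (x # y # r))"
  by (simp add: sum_tidx_Suc)

lemma lift_first:
  assumes "length r = k" "length r' = k"
  shows "lift n (Suc (Suc k)) 1 A (x # y # r) (x' # y' # r') = (if y = y' \<and> r = r' then A x x' else 0)"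
proof -
  have "(\<forall>j\<in>{..<Suc (Suc k)} - {0}. (x # y # r) ! j = (x' # y' # r') ! j)
      \<longleftrightarrow> (\<forall>j<Suc k. (y # r) ! j = (y' # r') ! j)"
    by (simp only: Ball_def Diff_iff lessThan_iff singleton_iff imp_conjL All_less_Suc2) simp
  also have "\<dots> \<longleftrightarrow> y # r = y' # r'"
    using assms by (simp add: list_eq_iff_nth_eq)
  finally show ?thesis
    unfolding lift_def by (simp add: prod_indicator)
qed

lemma lift_second:
  assumes "length r = k" "length r' = k"
  shows "lift n (Suc (Suc k)) 2 A (x # y # r) (x' # y' # r') = (if x = x' \<and> r = r' then A y y' else 0)"
proof -
  have "(\<forall>j\<in>{..<Suc (Suc k)} - {1}. (x # y # r) ! j = (x' # y' # r') ! j)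
      \<longleftrightarrow> x = x' \<and> (\<forall>j<k. r ! j = r' ! j)"
    by (simp only: Ball_def Diff_iff lessThan_iff singleton_iff imp_conjL All_less_Suc2) simp
  also have "\<dots> \<longleftrightarrow> x = x' \<and> r = r'"
    using assms by (simp add: list_eq_iff_nth_eq)
  finally show ?thesis
    unfolding lift_def by (simp add: prod_indicator)
qed

definition id_mat :: "nat \<Rightarrow> nat \<Rightarrow> complex" where
  "id_mat x y = (if x = y then 1 else 0)"

(* Tr((A \<otimes> B \<otimes> I) \<rho>) on H \<otimes> H \<otimes> H^{\<otimes>k}. *)
definition pair_trace ::
  "nat \<Rightarrow> nat \<Rightarrow> (nat list \<Rightarrow> nat list \<Rightarrow> complex) \<Rightarrow> (nat \<Rightarrow> nat \<Rightarrow> complex) \<Rightarrow> (nat \<Rightarrow> nat \<Rightarrow> complex) \<Rightarrow> complex"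
where
  "pair_trace n k \<rho> A B =
     (\<Sum>r\<in>tidx n k. \<Sum>x<n. \<Sum>y<n. \<Sum>x'<n. \<Sum>y'<n. A x x' * B y y' * \<rho> (x' # y' # r) (x # y # r))"

lemma trace_tmul_eq_pair_trace:
  assumes "\<And>x y r x' y' r'. x < n \<Longrightarrow> y < n \<Longrightarrow> x' < n \<Longrightarrow> y' < n \<Longrightarrow> r \<in> tidx n k \<Longrightarrow> r' \<in> tidx n k \<Longrightarrow>
      X (x # y # r) (x' # y' # r') = (if r = r' then A x x' * B y y' else 0)"
  shows "ttrace n (Suc (Suc k)) (tmul n (Suc (Suc k)) X \<rho>) = pair_trace n k \<rho> A B"
proof -
  have "ttrace n (Suc (Suc k)) (tmul n (Suc (Suc k)) X \<rho>)
      = (\<Sum>x<n. \<Sum>y<n. \<Sum>r\<in>tidx n k. \<Sum>x'<n. \<Sum>y'<n. A x x' * B y y' * \<rho> (x' # y' # r) (x # y # r))"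
    unfolding ttrace_def tmul_def sum_tidx_Suc_Suc sum_distrib_right
    by (intro sum.cong refl) (simp add: assms if_zero_mult sum.delta' finite_tidx)
  also have "\<dots> = pair_trace n k \<rho> A B"
    unfolding pair_trace_def by (subst sum.swap) (simp add: sum.swap[of _ "tidx n k"])
  finally show ?thesis .
qed

lemma trace_lift1_lift2:
  "ttrace n (Suc (Suc k)) (tmul n (Suc (Suc k)) (tmul n (Suc (Suc k)) (lift n (Suc (Suc k)) 1 A) (lift n (Suc (Suc k)) 2 B)) \<rho>)
   = pair_trace n k \<rho> A B"
proof (rule trace_tmul_eq_pair_trace)
  fix x y r x' y' r'
  assume xy: "x < n" "y < n" "x' < n" "y' < n" and r: "r \<in> tidx n k" "r' \<in> tidx n k"
  have "tmul n (Suc (Suc k)) (lift n (Suc (Suc k)) 1 A) (lift n (Suc (Suc k)) 2 B) (x # y # r) (x' # y' # r')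
      = (\<Sum>x''<n. \<Sum>y''<n. \<Sum>r''\<in>tidx n k. if r'' = r then if y'' = y then if x'' = x' then
           (if r = r' then A x x' * B y y' else 0) else 0 else 0 else 0)"
    unfolding tmul_def sum_tidx_Suc_Suc using r
    by (intro sum.cong refl) (auto simp: tidx_def lift_first[unfolded One_nat_def] lift_second)
  also have "\<dots> = (if r = r' then A x x' * B y y' else 0)"
    using xy r by (simp add: sum.delta finite_tidx)
  finally show "tmul n (Suc (Suc k)) (lift n (Suc (Suc k)) 1 A) (lift n (Suc (Suc k)) 2 B) (x # y # r) (x' # y' # r')
      = (if r = r' then A x x' * B y y' else 0)" .
qed

lemma trace_lift2:
  "ttrace n (Suc (Suc k)) (tmul n (Suc (Suc k)) (lift n (Suc (Suc k)) 2 B) \<rho>) = pair_trace n k \<rho> id_mat B"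
  by (rule trace_tmul_eq_pair_trace) (auto simp: lift_second id_mat_def tidx_def)

lemma pair_trace_cong:
  assumes "\<And>x y. x < n \<Longrightarrow> y < n \<Longrightarrow> A x y = A' x y" "\<And>x y. x < n \<Longrightarrow> y < n \<Longrightarrow> B x y = B' x y"
  shows "pair_trace n k \<rho> A B = pair_trace n k \<rho> A' B'"
  unfolding pair_trace_def by (intro sum.cong refl) (simp add: assms)

lemma pair_trace_diff_left:
  "pair_trace n k \<rho> (\<lambda>x y. A x y - A' x y) B = pair_trace n k \<rho> A B - pair_trace n k \<rho> A' B"
  unfolding pair_trace_def by (simp add: sum_subtractf[symmetric] left_diff_distrib)

lemma pair_trace_scale_left: "pair_trace n k \<rho> (\<lambda>x y. c * A x y) B = c * pair_trace n k \<rho> A B"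
  unfolding pair_trace_def by (simp add: sum_distrib_left mult.assoc)

lemma pair_trace_scale_right: "pair_trace n k \<rho> A (\<lambda>x y. c * B x y) = c * pair_trace n k \<rho> A B"
  unfolding pair_trace_def by (simp add: sum_distrib_left ac_simps)

lemma pair_trace_sum_left:
  "pair_trace n k \<rho> (\<lambda>x y. \<Sum>j\<in>J. A j x y) B = (\<Sum>j\<in>J. pair_trace n k \<rho> (A j) B)"
  unfolding pair_trace_def by (simp add: sum_distrib_right sum.swap[of _ J])

lemma pair_trace_sum_right:
  "pair_trace n k \<rho> A (\<lambda>x y. \<Sum>j\<in>J. B j x y) = (\<Sum>j\<in>J. pair_trace n k \<rho> A (B j))"
  unfolding pair_trace_def by (simp add: sum_distrib_left sum_distrib_right sum.swap[of _ J] ac_simps)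

definition orth_projector :: "nat \<Rightarrow> (nat \<Rightarrow> nat \<Rightarrow> complex) \<Rightarrow> bool" where
  "orth_projector n P \<longleftrightarrow> self_adjoint n P \<and> (\<forall>i<n. \<forall>j<n. hmul n P P i j = P i j)"

lemma sum_id_mat_left: "i < n \<Longrightarrow> (\<Sum>l<n. id_mat i l * X l) = X i"
  by (simp add: id_mat_def if_zero_mult sum.delta)

lemma sum_id_mat_right: "j < n \<Longrightarrow> (\<Sum>l<n. X l * id_mat l j) = X j"
  by (simp add: id_mat_def mult_if_zero sum.delta')

lemma spectral_projector_orth_projector:
  "orth_projector n P \<Longrightarrow> spectral_projector n P 1 P"
  by (simp add: orth_projector_def spectral_projector_def)

lemma orth_projector_complement:
  assumes "orth_projector n P"
  shows "orth_projector n (\<lambda>x y. id_mat x y - P x y)"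
  unfolding orth_projector_def
proof (intro conjI allI impI)
  show "self_adjoint n (\<lambda>x y. id_mat x y - P x y)"
    unfolding self_adjoint_def
  proof (intro allI impI)
    fix i j assume "i < n" "j < n"
    then have "P j i = cnj (P i j)" using assms unfolding orth_projector_def self_adjoint_def by blast
    then show "id_mat j i - P j i = cnj (id_mat i j - P i j)" by (simp add: id_mat_def)
  qed
next
  fix i j assume ij: "i < n" "j < n"
  have "hmul n (\<lambda>x y. id_mat x y - P x y) (\<lambda>x y. id_mat x y - P x y) i j
      = (\<Sum>l<n. id_mat i l * id_mat l j) - (\<Sum>l<n. id_mat i l * P l j) - (\<Sum>l<n. P i l * id_mat l j) + hmul n P P i j"
    unfolding hmul_def by (simp add: algebra_simps sum.distrib sum_subtractf)
  also have "\<dots> = id_mat i j - P i j"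
    using assms ij by (simp add: orth_projector_def sum_id_mat_left sum_id_mat_right)
  finally show "hmul n (\<lambda>x y. id_mat x y - P x y) (\<lambda>x y. id_mat x y - P x y) i j = id_mat i j - P i j" .
qed

lemma spectral_projector_complement:
  assumes "orth_projector n P"
  shows "spectral_projector n P 0 (\<lambda>x y. id_mat x y - P x y)"
proof -
  have "hmv n (\<lambda>x y. id_mat x y - P x y) v i = v i - hmv n P v i" if "i < n" for v i
    using that by (simp add: hmv_def left_diff_distrib sum_subtractf sum_id_mat_left)
  then have "(\<forall>i<n. hmv n (\<lambda>x y. id_mat x y - P x y) v i = v i) \<longleftrightarrow> (\<forall>i<n. hmv n P v i = 0 * v i)" for v
    by auto
  then show ?thesis
    using orth_projector_complement[OF assms] unfolding spectral_projector_def orth_projector_def by blast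
qed

lemma pair_trace_orth_projector_complement:
  assumes smc: "sigma_SMC n (Suc (Suc k)) P \<rho>" and P: "orth_projector n P"
  shows "pair_trace n k \<rho> P (\<lambda>x y. id_mat x y - P x y) = 0"
    and "pair_trace n k \<rho> (\<lambda>x y. id_mat x y - P x y) P = 0"
proof -
  have slots: "(1::nat) \<in> {1..Suc (Suc k)}" "(2::nat) \<in> {1..Suc (Suc k)}" by auto
  have "pair_trace n k \<rho> P P = pair_trace n k \<rho> id_mat P"
    using smc[unfolded sigma_SMC_def, rule_format, OF spectral_projector_orth_projector[OF P] slots]
    unfolding trace_lift1_lift2 trace_lift2 .
  then show "pair_trace n k \<rho> (\<lambda>x y. id_mat x y - P x y) P = 0"
    by (simp add: pair_trace_diff_left)
  have "pair_trace n k \<rho> (\<lambda>x y. id_mat x y - P x y) (\<lambda>x y. id_mat x y - P x y)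
      = pair_trace n k \<rho> id_mat (\<lambda>x y. id_mat x y - P x y)"
    using smc[unfolded sigma_SMC_def, rule_format, OF spectral_projector_complement[OF P] slots]
    unfolding trace_lift1_lift2 trace_lift2 .
  then show "pair_trace n k \<rho> P (\<lambda>x y. id_mat x y - P x y) = 0"
    by (simp add: pair_trace_diff_left)
qed

definition outer :: "(nat \<Rightarrow> complex) \<Rightarrow> nat \<Rightarrow> nat \<Rightarrow> complex" where
  "outer u x y = u x * cnj (u y)"

lemma orth_projector_outer:
  assumes "N \<noteq> 0" "(\<Sum>l<n. cnj (u l) * u l) = of_real N"
  shows "orth_projector n (\<lambda>x y. outer u x y / of_real N)"
  unfolding orth_projector_def
proof (intro conjI allI impI)
  show "self_adjoint n (\<lambda>x y. outer u x y / of_real N)"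
    by (simp add: self_adjoint_def outer_def mult.commute)
  fix i j
  have "hmul n (\<lambda>x y. outer u x y / of_real N) (\<lambda>x y. outer u x y / of_real N) i j
      = u i * cnj (u j) / (of_real N * of_real N) * (\<Sum>l<n. cnj (u l) * u l)"
    unfolding hmul_def outer_def sum_distrib_left by (rule sum.cong) (simp_all add: field_simps)
  also have "\<dots> = outer u i j / of_real N"
    using assms by (simp add: outer_def field_simps)
  finally show "hmul n (\<lambda>x y. outer u x y / of_real N) (\<lambda>x y. outer u x y / of_real N) i j = outer u i j / of_real N" .
qed

(* <f \<otimes> e_r| \<rho> |f \<otimes> e_r> for a vector f of H \<otimes> H and the basis vector e_r of H^{\<otimes>k}. *)
definition block_form :: "nat \<Rightarrow> (nat list \<Rightarrow> nat list \<Rightarrow> complex) \<Rightarrow> nat list \<Rightarrow> (nat \<Rightarrow> nat \<Rightarrow> complex) \<Rightarrow> complex" where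
  "block_form n \<rho> r f = (\<Sum>x'<n. \<Sum>y'<n. \<Sum>x<n. \<Sum>y<n. cnj (f x' y') * \<rho> (x' # y' # r) (x # y # r) * f x y)"

lemma pair_trace_outer:
  "pair_trace n k \<rho> (outer u) (outer v) = (\<Sum>r\<in>tidx n k. block_form n \<rho> r (\<lambda>x y. u x * v y))"
  unfolding pair_trace_def block_form_def outer_def
  by (rule sum.cong[OF refl], subst sum_swap_pairs) (simp add: ac_simps)

lemma block_form_nonneg:
  assumes "density_operator n (Suc (Suc k)) \<rho>" "r \<in> tidx n k"
  shows "Re (block_form n \<rho> r f) \<ge> 0"
proof -
  define v where "v a = (if drop 2 a = r then f (a ! 0) (a ! 1) else 0)" for a
  let ?T = "tidx n (Suc (Suc k))"
  have v: "v (x # y # r') = (if r' = r then f x y else 0)"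
    and cnj_v: "cnj (v (x # y # r')) = (if r' = r then cnj (f x y) else 0)" for x y r'
    by (simp_all add: v_def)
  have "0 \<le> Re (\<Sum>a\<in>?T. \<Sum>b\<in>?T. cnj (v a) * \<rho> a b * v b)"
    using assms(1) unfolding density_operator_def by blast
  also have "(\<Sum>a\<in>?T. \<Sum>b\<in>?T. cnj (v a) * \<rho> a b * v b) = (\<Sum>a\<in>?T. cnj (v a) * (\<Sum>b\<in>?T. \<rho> a b * v b))"
    by (simp add: sum_distrib_left mult.assoc)
  also have "\<dots> = (\<Sum>x'<n. \<Sum>y'<n. cnj (f x' y') * (\<Sum>b\<in>?T. \<rho> (x' # y' # r) b * v b))"
    unfolding sum_tidx_Suc_Suc using assms(2) by (simp add: cnj_v if_zero_mult sum.delta' finite_tidx)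
  also have "\<dots> = block_form n \<rho> r f"
    unfolding block_form_def sum_tidx_Suc_Suc using assms(2)
    by (simp add: v mult_if_zero sum.delta' finite_tidx sum_distrib_left mult.assoc)
  finally show ?thesis .
qed

lemma block_form_eq_zero_of_pair_trace_outer:
  assumes "density_operator n (Suc (Suc k)) \<rho>" "Re (pair_trace n k \<rho> (outer u) (outer v)) = 0" "r \<in> tidx n k"
  shows "Re (block_form n \<rho> r (\<lambda>x y. u x * v y)) = 0"
proof -
  have "(\<Sum>r\<in>tidx n k. Re (block_form n \<rho> r (\<lambda>x y. u x * v y))) = 0"
    using assms(2) by (simp add: pair_trace_outer Re_sum)
  then show ?thesis
    using assms(1,3) by (simp add: sum_nonneg_eq_0_iff finite_tidx block_form_nonneg)
qed

lemma Re_pair_trace_outer_nonneg: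
  "density_operator n (Suc (Suc k)) \<rho> \<Longrightarrow> Re (pair_trace n k \<rho> (outer u) (outer v)) \<ge> 0"
  by (simp add: pair_trace_outer Re_sum sum_nonneg block_form_nonneg)

lemma Re_pair_trace_outer_eq_zero_of_sum:
  assumes "density_operator n (Suc (Suc k)) \<rho>" "finite J" "\<And>j. j \<in> J \<Longrightarrow> w j \<ge> 0" "j \<in> J" "w j > 0"
    and "(\<Sum>j\<in>J. of_real (w j) * pair_trace n k \<rho> (outer (a j)) (outer (b j))) = 0"
  shows "Re (pair_trace n k \<rho> (outer (a j)) (outer (b j))) = 0"
proof -
  have "(\<Sum>j\<in>J. w j * Re (pair_trace n k \<rho> (outer (a j)) (outer (b j)))) = 0"
    using arg_cong[OF assms(6), of Re] by (simp add: Re_sum)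
  then show ?thesis
    using assms(1-5) by (auto simp: sum_nonneg_eq_0_iff Re_pair_trace_outer_nonneg)
qed

lemma block_form_orthogonal_eq_zero:
  assumes dens: "density_operator n (Suc (Suc k)) \<rho>"
    and smc: "\<forall>\<sigma>. self_adjoint n \<sigma> \<longrightarrow> sigma_SMC n (Suc (Suc k)) \<sigma> \<rho>"
    and N: "N > 0" "(\<Sum>l<n. cnj (u l) * u l) = of_real N"
    and complement: "\<And>x y. x < n \<Longrightarrow> y < n \<Longrightarrow>
      id_mat x y - outer u x y / of_real N = (\<Sum>j\<in>J. of_real (w j) * outer (g j) x y)"
    and J: "finite J" "\<And>j. j \<in> J \<Longrightarrow> w j \<ge> 0" "j \<in> J" "w j > 0"
    and r: "r \<in> tidx n k"
  shows "Re (block_form n \<rho> r (\<lambda>x y. u x * g j y)) = 0"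
    and "Re (block_form n \<rho> r (\<lambda>x y. g j x * u y)) = 0"
proof -
  define P where "P = (\<lambda>x y. of_real (1 / N) * outer u x y)"
  define Q where "Q = (\<lambda>x y. \<Sum>j\<in>J. of_real (w j) * outer (g j) x y)"
  have "orth_projector n P"
    unfolding P_def using orth_projector_outer[OF _ N(2)] N(1) by (simp add: field_simps)
  moreover have "pair_trace n k \<rho> A (\<lambda>x y. id_mat x y - P x y) = pair_trace n k \<rho> A Q"
    and "pair_trace n k \<rho> (\<lambda>x y. id_mat x y - P x y) A = pair_trace n k \<rho> Q A" for A
    by (rule pair_trace_cong; simp add: P_def Q_def complement field_simps)+
  ultimately have "pair_trace n k \<rho> P Q = 0" "pair_trace n k \<rho> Q P = 0"
    using pair_trace_orth_projector_complement smc by (metis orth_projector_def)+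
  then have uQ: "pair_trace n k \<rho> (outer u) Q = 0" and Qu: "pair_trace n k \<rho> Q (outer u) = 0"
    unfolding P_def pair_trace_scale_left pair_trace_scale_right using N(1) by simp_all
  have "(\<Sum>j\<in>J. of_real (w j) * pair_trace n k \<rho> (outer u) (outer (g j))) = 0"
    using uQ unfolding Q_def pair_trace_sum_right pair_trace_scale_right .
  then have uv: "Re (pair_trace n k \<rho> (outer u) (outer (g j))) = 0"
    by (intro Re_pair_trace_outer_eq_zero_of_sum[where w = w and j = j and a = "\<lambda>_. u", OF dens J])
  have "(\<Sum>j\<in>J. of_real (w j) * pair_trace n k \<rho> (outer (g j)) (outer u)) = 0"
    using Qu unfolding Q_def pair_trace_sum_left pair_trace_scale_left .
  then have vu: "Re (pair_trace n k \<rho> (outer (g j)) (outer u)) = 0"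
    by (intro Re_pair_trace_outer_eq_zero_of_sum[where w = w and j = j and b = "\<lambda>_. u", OF dens J])
  from uv vu show "Re (block_form n \<rho> r (\<lambda>x y. u x * g j y)) = 0"
    and "Re (block_form n \<rho> r (\<lambda>x y. g j x * u y)) = 0"
    using block_form_eq_zero_of_pair_trace_outer[OF dens _ r] by blast+
qed

definition unit_vec :: "nat \<Rightarrow> nat \<Rightarrow> complex" where
  "unit_vec i x = (if x = i then 1 else 0)"

lemma cnj_unit_vec: "cnj (unit_vec i x) = unit_vec i x"
  by (simp add: unit_vec_def)

lemma block_form_unit_vec:
  assumes "i < n" "j < n"
  shows "block_form n \<rho> r (\<lambda>x y. unit_vec i x * unit_vec j y) = \<rho> (i # j # r) (i # j # r)"
proof -
  have "block_form n \<rho> r (\<lambda>x y. unit_vec i x * unit_vec j y) = (\<Sum>x'<n. \<Sum>y'<n. \<Sum>x<n. \<Sum>y<n.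
      if y = j then if x = i then if y' = j then if x' = i then \<rho> (i # j # r) (i # j # r) else 0 else 0 else 0 else 0)"
    unfolding block_form_def unit_vec_def by (intro sum.cong refl) auto
  also have "\<dots> = \<rho> (i # j # r) (i # j # r)"
    using assms by simp
  finally show ?thesis .
qed

lemma block_form_parallelogram:
  "block_form n \<rho> r (\<lambda>x y. f x y + g x y) + block_form n \<rho> r (\<lambda>x y. f x y - g x y)
     = 2 * block_form n \<rho> r f + 2 * block_form n \<rho> r g"
  unfolding block_form_def by (simp add: sum.distrib[symmetric] sum_distrib_left algebra_simps)

lemma block_form_eq_zero_of_plus_minus:
  assumes "density_operator n (Suc (Suc k)) \<rho>" "r \<in> tidx n k"
    and "Re (block_form n \<rho> r (\<lambda>x y. f x y + g x y)) = 0" "Re (block_form n \<rho> r (\<lambda>x y. f x y - g x y)) = 0"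
  shows "Re (block_form n \<rho> r f) = 0"
proof -
  have "2 * Re (block_form n \<rho> r f) + 2 * Re (block_form n \<rho> r g) = 0"
    using arg_cong[OF block_form_parallelogram[of n \<rho> r f g], of Re] assms(3,4) by simp
  then show ?thesis
    using block_form_nonneg[OF assms(1,2), of f] block_form_nonneg[OF assms(1,2), of g] by linarith
qed

lemma sum_outer_unit_vec:
  "finite J \<Longrightarrow> (\<Sum>l\<in>J. outer (unit_vec l) x y) = (if x \<in> J \<and> x = y then 1 else 0)"
  by (auto simp: outer_def unit_vec_def if_zero_mult sum.delta)

lemma Re_density_diag_distinct_eq_zero:
  assumes dens: "density_operator n (Suc (Suc k)) \<rho>"
    and smc: "\<forall>\<sigma>. self_adjoint n \<sigma> \<longrightarrow> sigma_SMC n (Suc (Suc k)) \<sigma> \<rho>"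
    and ij: "i < n" "j < n" "i \<noteq> j" and r: "r \<in> tidx n k"
  shows "Re (\<rho> (i # j # r) (i # j # r)) = 0"
proof -
  have norm: "(\<Sum>l<n. cnj (unit_vec i l) * unit_vec i l) = of_real 1"
    using ij by (simp add: cnj_unit_vec) (simp add: unit_vec_def if_zero_mult)
  have complement: "id_mat x y - outer (unit_vec i) x y / of_real 1
      = (\<Sum>l\<in>{..<n} - {i}. of_real 1 * outer (unit_vec l) x y)" if "x < n" "y < n" for x y
    using that by (simp add: sum_outer_unit_vec) (auto simp: id_mat_def outer_def unit_vec_def)
  have "Re (block_form n \<rho> r (\<lambda>x y. unit_vec i x * unit_vec j y)) = 0"
    by (rule block_form_orthogonal_eq_zero(1)[OF dens smc _ norm complement]) (use ij r in auto)
  then show ?thesis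
    using block_form_unit_vec ij by simp
qed

lemma block_form_twisted_eq_zero:
  assumes dens: "density_operator n (Suc (Suc k)) \<rho>"
    and smc: "\<forall>\<sigma>. self_adjoint n \<sigma> \<longrightarrow> sigma_SMC n (Suc (Suc k)) \<sigma> \<rho>"
    and ij: "i < n" "j < n" "i \<noteq> j" and r: "r \<in> tidx n k"
    and \<omega>: "cnj \<omega> * \<omega> = 1"
  shows "Re (block_form n \<rho> r (\<lambda>x y. (unit_vec i x + \<omega> * unit_vec j x) * (unit_vec i y - \<omega> * unit_vec j y))) = 0"
    and "Re (block_form n \<rho> r (\<lambda>x y. (unit_vec i x - \<omega> * unit_vec j x) * (unit_vec i y + \<omega> * unit_vec j y))) = 0"
proof -
  define u where "u x = unit_vec i x + \<omega> * unit_vec j x" for x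
  define u' where "u' x = unit_vec i x - \<omega> * unit_vec j x" for x
  define g where "g l = (if l = i then u' else unit_vec l)" for l
  define w :: "nat \<Rightarrow> real" where "w l = (if l = i then 1 / 2 else 1)" for l
  have \<omega>': "\<omega> * cnj \<omega> = 1"
    using \<omega> by (simp add: mult.commute)
  have norm: "(\<Sum>l<n. cnj (u l) * u l) = of_real 2"
  proof -
    have "(\<Sum>l<n. cnj (u l) * u l) = (\<Sum>l<n. unit_vec i l + unit_vec j l)"
      using ij \<omega> by (intro sum.cong) (auto simp: u_def unit_vec_def)
    then show ?thesis
      using ij by (simp add: sum.distrib unit_vec_def)
  qed
  (* u and u' are orthogonal with <u|u> = <u'|u'> = 2, so I - |u><u|/2 = |u'><u'|/2 + (sum of |e_l><e_l| over l \<notin> {i, j}). *)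
  have complement: "id_mat x y - outer u x y / of_real 2 = (\<Sum>l\<in>{..<n} - {j}. of_real (w l) * outer (g l) x y)"
    if "x < n" "y < n" for x y
  proof -
    have "(\<Sum>l\<in>{..<n} - {j}. of_real (w l) * outer (g l) x y)
        = outer u' x y / 2 + (\<Sum>l\<in>{..<n} - {j} - {i}. outer (unit_vec l) x y)"
      using ij by (subst sum.remove[of _ i]) (auto simp: w_def g_def intro!: sum.cong)
    also have "\<dots> = outer u' x y / 2 + (if x \<in> {..<n} - {j} - {i} \<and> x = y then 1 else 0)"
      by (simp add: sum_outer_unit_vec)
    also have "\<dots> = id_mat x y - outer u x y / of_real 2"
      using that ij \<omega> \<omega>' by (auto simp: outer_def u_def u'_def unit_vec_def id_mat_def field_simps)
    finally show ?thesis ..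
  qed
  have "Re (block_form n \<rho> r (\<lambda>x y. u x * g i y)) = 0" "Re (block_form n \<rho> r (\<lambda>x y. g i x * u y)) = 0"
    by (rule block_form_orthogonal_eq_zero[OF dens smc _ norm complement]; use ij r in \<open>auto simp: w_def\<close>)+
  then show "Re (block_form n \<rho> r (\<lambda>x y. (unit_vec i x + \<omega> * unit_vec j x) * (unit_vec i y - \<omega> * unit_vec j y))) = 0"
    and "Re (block_form n \<rho> r (\<lambda>x y. (unit_vec i x - \<omega> * unit_vec j x) * (unit_vec i y + \<omega> * unit_vec j y))) = 0"
    by (simp_all add: g_def u_def u'_def)
qed

lemma Re_density_diag_repeated_eq_zero:
  assumes dens: "density_operator n (Suc (Suc k)) \<rho>"
    and smc: "\<forall>\<sigma>. self_adjoint n \<sigma> \<longrightarrow> sigma_SMC n (Suc (Suc k)) \<sigma> \<rho>"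
    and ij: "i < n" "j < n" "i \<noteq> j" and r: "r \<in> tidx n k"
  shows "Re (\<rho> (i # i # r) (i # i # r)) = 0"
proof -
  define E where "E a b x y = unit_vec a x * unit_vec b y" for a b x y
  note twisted_1 = block_form_twisted_eq_zero[OF dens smc ij r, of 1]
  note twisted_i = block_form_twisted_eq_zero[OF dens smc ij r, of \<i>]
  have ii_minus_jj: "Re (block_form n \<rho> r (\<lambda>x y. E i i x y - E j j x y)) = 0"
  proof (rule block_form_eq_zero_of_plus_minus[OF dens r, where g = "\<lambda>x y. E j i x y - E i j x y"])
    show "Re (block_form n \<rho> r (\<lambda>x y. (E i i x y - E j j x y) + (E j i x y - E i j x y))) = 0"
      using twisted_1(1) by (simp add: E_def algebra_simps)
    show "Re (block_form n \<rho> r (\<lambda>x y. (E i i x y - E j j x y) - (E j i x y - E i j x y))) = 0"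
      using twisted_1(2) by (simp add: E_def algebra_simps)
  qed
  have ii_plus_jj: "Re (block_form n \<rho> r (\<lambda>x y. E i i x y + E j j x y)) = 0"
  proof (rule block_form_eq_zero_of_plus_minus[OF dens r, where g = "\<lambda>x y. \<i> * (E j i x y - E i j x y)"])
    show "Re (block_form n \<rho> r (\<lambda>x y. (E i i x y + E j j x y) + \<i> * (E j i x y - E i j x y))) = 0"
      using twisted_i(1) by (simp add: E_def algebra_simps)
    show "Re (block_form n \<rho> r (\<lambda>x y. (E i i x y + E j j x y) - \<i> * (E j i x y - E i j x y))) = 0"
      using twisted_i(2) by (simp add: E_def algebra_simps)
  qed
  have "Re (block_form n \<rho> r (E i i)) = 0"
    by (rule block_form_eq_zero_of_plus_minus[OF dens r ii_plus_jj ii_minus_jj])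
  moreover have "E i i = (\<lambda>x y. unit_vec i x * unit_vec i y)"
    by (simp add: fun_eq_iff E_def)
  ultimately show ?thesis
    using block_form_unit_vec[OF ij(1,1)] by simp
qed

theorem proposition1:
  fixes n m :: nat
  assumes "n \<ge> 2" and "m \<ge> 2"
  shows "\<not> (\<exists>\<rho>. density_operator n m \<rho> \<and>
              (\<forall>\<sigma>. self_adjoint n \<sigma> \<longrightarrow> sigma_SMC n m \<sigma> \<rho>))"
proof
  assume "\<exists>\<rho>. density_operator n m \<rho> \<and> (\<forall>\<sigma>. self_adjoint n \<sigma> \<longrightarrow> sigma_SMC n m \<sigma> \<rho>)"
  moreover obtain k where m: "m = Suc (Suc k)"
    using assms(2) by (intro that[of "m - 2"]) simp
  ultimately obtain \<rho> where dens: "density_operator n (Suc (Suc k)) \<rho>"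
    and smc: "\<forall>\<sigma>. self_adjoint n \<sigma> \<longrightarrow> sigma_SMC n (Suc (Suc k)) \<sigma> \<rho>"
    by blast
  have diagonal_zero: "Re (\<rho> (x # y # r) (x # y # r)) = 0" if "x < n" "y < n" "r \<in> tidx n k" for x y r
  proof (cases "x = y")
    case True
    have "(if x = 0 then 1 else 0) < n" "(if x = 0 then 1 else 0) \<noteq> x"
      using assms(1) by auto
    then show ?thesis
      using Re_density_diag_repeated_eq_zero[OF dens smc \<open>x < n\<close> _ _ \<open>r \<in> tidx n k\<close>] True by simp
  next
    case False
    then show ?thesis
      using Re_density_diag_distinct_eq_zero[OF dens smc that(1,2) False that(3)] by simp
  qed
  have "1 = Re (ttrace n (Suc (Suc k)) \<rho>)"
    using dens by (simp add: density_operator_def)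
  also have "\<dots> = (\<Sum>x<n. \<Sum>y<n. \<Sum>r\<in>tidx n k. Re (\<rho> (x # y # r) (x # y # r)))"
    by (simp add: ttrace_def sum_tidx_Suc_Suc Re_sum)
  also have "\<dots> = 0"
    using diagonal_zero by simp
  finally show False by simp
qed

end
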